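(* Let $X$ be an infinite-dimensional complex Banach space and $\mathbb{X}$ a compact topological space with at most countably many connected components. Then for every $\mathcal{T}\in\mathcal{C}(\mathbb{X},L(X))$ the Weyl spectrum $\sigma_W(\mathcal{T})$ is a closed subset of $\mathbb{C}$, and the map $\mathcal{T}\mapsto\sigma_W(\mathcal{T})$ is upper semi-continuous: whenever $\mathcal{T}_n\to\mathcal{T}$ in $\mathcal{C}(\mathbb{X},L(X))$, one has $\limsup_{n\to\infty}\sigma_W(\mathcal{T}_n)\subset\sigma_W(\mathcal{T})$.
   Context: $L(X)$ is the algebra of bounded operators, $Fred(X)$ the Fredholm operators, $ind(T)=\dim N(T)-\operatorname{codim}R(T)$. $\mathcal{C}(\mathbb{X},L(X))$ is the Banach algebra of norm-continuous maps $\mathbb{X}\to L(X)$ with pointwise operations and norm $\|\mathcal{T}\|=\sup_x\|\mathcal{T}_x\|$, where $\mathcal{T}_x=\mathcal{T}(x)$; $\mathcal{I}$ is the constant family $x\mapsto I$. $\mathcal{T}$ is a Weyl family if $\mathcal{T}_x\in Fred(X)$ and $ind(\mathcal{T}_x)=0$ for all $x\in\mathbb{X}$. The Weyl spectrum is $\sigma_W(\mathcal{T})=\{\lambda\in\mathbb{C}:\mathcal{T}-\lambda\mathcal{I}\text{ is not a Weyl family}\}$. For sets $A_n\subset\mathbb{C}$, $\limsup A_n$ (Kuratowski upper limit) is the set of $\lambda$ such that every neighborhood of $\lambda$ meets infinitely many $A_n$. *)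

theory Defs
  imports "HOL-Analysis.Analysis"
begin

class complex_banach = banach +
  fixes cscale :: "complex \<Rightarrow> 'a \<Rightarrow> 'a"
  assumes cscale_of_real: "cscale (complex_of_real r) x = r *\<^sub>R x"
    and cscale_add_left: "cscale (a + b) x = cscale a x + cscale b x"
    and cscale_add_right: "cscale a (x + y) = cscale a x + cscale a y"
    and cscale_cscale: "cscale a (cscale b x) = cscale (a * b) x"
    and norm_cscale: "norm (cscale a x) = cmod a * norm x"

definition cspan :: "'a::complex_banach set \<Rightarrow> 'a set" where
  "cspan B = {x. \<exists>F c. finite F \<and> F \<subseteq> B \<and> x = (\<Sum>v\<in>F. cscale (c v) v)}"

definition cdim :: "'a::complex_banach set \<Rightarrow> nat" where
  "cdim S = (LEAST n. \<exists>B. finite B \<and> card B = n \<and> B \<subseteq> S \<and> S \<subseteq> cspan B)"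

text \<open>Codimension of a subspace R, i.e. dim (X / R).\<close>
definition ccodim :: "'a::complex_banach set \<Rightarrow> nat" where
  "ccodim R = (LEAST n. \<exists>B. finite B \<and> card B = n \<and> cspan (R \<union> B) = UNIV)"

definition infinite_dimensional :: "'a::complex_banach itself \<Rightarrow> bool" where
  "infinite_dimensional _ \<longleftrightarrow> \<not> (\<exists>B::'a set. finite B \<and> cspan B = UNIV)"

text \<open>Bounded operators L(X): bounded (real-)linear maps that are complex linear.\<close>
definition is_cbounded :: "('a::complex_banach \<Rightarrow>\<^sub>L 'a) \<Rightarrow> bool" where
  "is_cbounded T \<longleftrightarrow> (\<forall>c x. blinfun_apply T (cscale c x) = cscale c (blinfun_apply T x))"

definition kernel :: "('a::complex_banach \<Rightarrow> 'a) \<Rightarrow> 'a set" where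
  "kernel f = {x. f x = 0}"

definition fredholm :: "('a::complex_banach \<Rightarrow> 'a) \<Rightarrow> bool" where
  "fredholm f \<longleftrightarrow> (\<exists>B. finite B \<and> kernel f \<subseteq> cspan B)
                   \<and> (\<exists>B. finite B \<and> cspan (range f \<union> B) = UNIV)"

definition findex :: "('a::complex_banach \<Rightarrow> 'a) \<Rightarrow> int" where
  "findex f = int (cdim (kernel f)) - int (ccodim (range f))"

definition weyl_family :: "('x \<Rightarrow> ('a::complex_banach \<Rightarrow> 'a)) \<Rightarrow> bool" where
  "weyl_family T \<longleftrightarrow> (\<forall>x. fredholm (T x) \<and> findex (T x) = 0)"

definition weyl_spectrum :: "('x \<Rightarrow> ('a::complex_banach \<Rightarrow>\<^sub>L 'a)) \<Rightarrow> complex set" where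
  "weyl_spectrum T = {z. \<not> weyl_family (\<lambda>x v. blinfun_apply (T x) v - cscale z v)}"

definition kuratowski_limsup :: "(nat \<Rightarrow> 'b::topological_space set) \<Rightarrow> 'b set" where
  "kuratowski_limsup A = {z. \<forall>U. open U \<and> z \<in> U \<longrightarrow> infinite {n. A n \<inter> U \<noteq> {}}}"

end

theory Submission
  imports Defs
begin

text \<open>The Fredholm operators of index zero form an open set. If \<open>A\<close> has index zero, a
  finite-rank operator \<open>K\<close> that maps the kernel of \<open>A\<close> isomorphically onto a complement of
  its range (built from Hahn--Banach functionals) makes \<open>A + K\<close> bijective, hence bounded below
  by the bounded inverse theorem. Then \<open>B + K\<close> stays bijective for every \<open>B\<close> close to \<open>A\<close>, and
  \<open>B = (B + K) - K\<close> has index zero again by rank--nullity. For a continuous family on a compact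
  space the radius can be chosen uniformly in the parameter, so a point outside the Weyl spectrum
  of \<open>T\<close> has a neighbourhood that avoids the Weyl spectrum of every family uniformly close to \<open>T\<close>:
  this gives both closedness and upper semicontinuity.\<close>

section \<open>Complex scalar multiplication\<close>

lemma cscale_one [simp]: "cscale 1 x = x"
  using cscale_of_real[of 1 x] by simp

interpretation cv: vector_space "cscale :: complex \<Rightarrow> 'a::complex_banach \<Rightarrow> 'a"
  by unfold_locales (auto simp: cscale_add_left cscale_add_right cscale_cscale)

interpretation cvp: vector_space_pair "cscale :: complex \<Rightarrow> 'a::complex_banach \<Rightarrow> 'a"
   "cscale :: complex \<Rightarrow> 'a::complex_banach \<Rightarrow> 'a"
  by unfold_locales

abbreviation clinear :: "('a::complex_banach \<Rightarrow> 'a) \<Rightarrow> bool" where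
  "clinear f \<equiv> Vector_Spaces.linear cscale cscale f"

lemma cspan_eq_span: "cspan = cv.span"
  unfolding cspan_def cv.span_explicit by auto

lemma scaleR_eq_cscale: "r *\<^sub>R x = cscale (complex_of_real r) x"
  by (simp add: cscale_of_real)

lemma cscale_scaleR_commute: "cscale c (r *\<^sub>R x) = r *\<^sub>R cscale c (x::'a::complex_banach)"
  by (simp add: scaleR_eq_cscale mult.commute)

lemma cscale_eq_Re_Im: "cscale c x = Re c *\<^sub>R x + Im c *\<^sub>R cscale \<i> (x::'a::complex_banach)"
proof -
  have "cscale c x = cscale (complex_of_real (Re c) + complex_of_real (Im c) * \<i>) x"
    by (metis complex_eq mult.commute)
  then show ?thesis
    by (simp only: cscale_add_left flip: cv.scale_scale scaleR_eq_cscale)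
qed

lemma bounded_linear_cscale_right: "bounded_linear (cscale c :: 'a::complex_banach \<Rightarrow> 'a)"
  by (rule bounded_linear_intro[where K="cmod c"])
     (auto simp: cscale_add_right cscale_scaleR_commute norm_cscale mult.commute)

lemma bounded_linear_cscale_left: "bounded_linear (\<lambda>c. cscale c (a::'a::complex_banach))"
  by (rule bounded_linear_intro[where K="norm a"])
     (auto simp: cscale_add_left scaleR_eq_cscale norm_cscale scaleR_conv_of_real)

lemma subspace_if_csubspace: "cv.subspace Y \<Longrightarrow> subspace (Y :: 'a::complex_banach set)"
  unfolding subspace_def cv.subspace_def by (simp add: scaleR_eq_cscale)

lemma clinear_blinfun_apply:
  assumes "is_cbounded T"
  shows "clinear (blinfun_apply T)"
  unfolding Vector_Spaces.linear_iff
  using assms cv.vector_space_axioms by (auto simp: is_cbounded_def blinfun.add_right)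

lemma is_cbounded_diff: "is_cbounded A \<Longrightarrow> is_cbounded B \<Longrightarrow> is_cbounded (A - B)"
  unfolding is_cbounded_def by (simp add: blinfun.diff_left cv.scale_right_diff_distrib)

section \<open>Finite-dimensional subspaces and codimension\<close>

lemma span_Int_span_eq_zero:
  fixes C D :: "'a::complex_banach set"
  assumes ind: "cv.independent (C \<union> D)" and disj: "C \<inter> D = {}"
  shows "cv.span C \<inter> cv.span D = {0}"
proof -
  have "x = 0" if xC: "x \<in> cv.span C" and xD: "x \<in> cv.span D" for x
  proof -
    obtain t u where t: "finite t" "t \<subseteq> C" and x1: "x = (\<Sum>a\<in>t. cscale (u a) a)"
      using xC unfolding cv.span_explicit by auto
    obtain t' w where t': "finite t'" "t' \<subseteq> D" and x2: "x = (\<Sum>a\<in>t'. cscale (w a) a)"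
      using xD unfolding cv.span_explicit by auto
    define v where "v a = (if a \<in> t then u a else - w a)" for a
    have dj: "t \<inter> t' = {}" using t t' disj by auto
    have "(\<Sum>a\<in>t. cscale (v a) a) = x" using x1 by (simp add: v_def)
    moreover have "(\<Sum>a\<in>t'. cscale (v a) a) = (\<Sum>a\<in>t'. - cscale (w a) a)"
      using dj by (intro sum.cong) (auto simp: v_def)
    then have "(\<Sum>a\<in>t'. cscale (v a) a) = - x"
      by (simp add: x2 sum_negf)
    ultimately have "(\<Sum>a\<in>t \<union> t'. cscale (v a) a) = 0"
      by (simp add: sum.union_disjoint[OF t(1) t'(1) dj])
    then have "\<forall>a\<in>t \<union> t'. v a = 0"
      using ind t t' unfolding cv.independent_explicit_finite_subsets by blast
    then have "\<forall>a\<in>t. u a = 0" by (metis UnI1 v_def)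
    then show "x = 0" using x1 by simp
  qed
  then show ?thesis using cv.span_zero by auto
qed

lemma dim_kernel_add_dim_image:
  fixes f :: "'a::complex_banach \<Rightarrow> 'a"
  assumes f: "clinear f" and W: "cv.subspace W" and W0: "finite W0" "W \<subseteq> cv.span W0"
  shows "cv.dim {x\<in>W. f x = 0} + cv.dim (f ` W) = cv.dim W"
proof -
  let ?K = "{x\<in>W. f x = 0}"
  obtain C where C: "C \<subseteq> ?K" "cv.independent C" "?K \<subseteq> cv.span C" "card C = cv.dim ?K"
    using cv.basis_exists by blast
  obtain B where B: "C \<subseteq> B" "B \<subseteq> W" "cv.independent B" "W \<subseteq> cv.span B"
    using cv.maximal_independent_subset_extend[of C W] C by blast
  have "finite B" using cv.independent_span_bound[OF W0(1) B(3)] B(2) W0(2) by auto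
  define D where "D = B - C"
  have BCD: "B = C \<union> D" "C \<inter> D = {}" using B(1) by (auto simp: D_def)
  have spD: "cv.span D \<subseteq> W"
    using B(2) W by (intro cv.span_minimal) (auto simp: D_def)
  have "x = 0" if "x \<in> cv.span D" "f x = 0" for x
  proof -
    have "x \<in> cv.span C" using that spD C(3) by auto
    then show ?thesis using span_Int_span_eq_zero[of C D] that B(3) BCD by auto
  qed
  then have inj: "inj_on f (cv.span D)"
    by (simp add: cvp.linear_inj_on_iff_eq_0[OF f])
  have indfD: "cv.independent (f ` D)"
    using cvp.linear_independent_injective_image[OF f _ inj] B(3) BCD cv.independent_mono by blast
  have "f ` W \<subseteq> cv.span (f ` D)"
  proof -
    have "f ` W \<subseteq> cv.span (f ` B)" using B(4) cvp.linear_spans_image[OF f] by blast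
    also have "\<dots> \<subseteq> cv.span (insert 0 (f ` D))"
      using C(1) by (intro cv.span_mono) (auto simp: D_def)
    finally show ?thesis by simp
  qed
  then have "card (f ` D) = cv.dim (f ` W)"
    using indfD spD cv.span_superset[of D] by (intro cv.basis_card_eq_dim) auto
  moreover have "card (f ` D) = card D"
    using inj cv.span_superset by (intro card_image) (auto intro: inj_on_subset)
  moreover have "card B = card C + card D"
    using \<open>finite B\<close> BCD by (simp add: card_Un_disjoint)
  ultimately show ?thesis using cv.basis_card_eq_dim[OF B(2,4,3)] C(4) by simp
qed

lemma ccodim_eq_card:
  fixes R D :: "'a::complex_banach set"
  assumes R: "cv.subspace R" and D: "finite D" "cv.independent D"
    and RD: "R \<inter> cv.span D \<subseteq> {0}" and span_RD: "cv.span (R \<union> D) = UNIV"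
  shows "ccodim R = card D"
  unfolding ccodim_def cspan_eq_span
proof (rule Least_equality)
  show "\<exists>B. finite B \<and> card B = card D \<and> cv.span (R \<union> B) = UNIV"
    using D span_RD by blast
next
  fix n assume "\<exists>B. finite B \<and> card B = n \<and> cv.span (R \<union> B) = UNIV"
  then obtain B where B: "finite B" "card B = n" "cv.span (R \<union> B) = UNIV" by blast
  have "\<exists>s. s \<in> cv.span B \<and> d - s \<in> R" for d
  proof -
    have "d \<in> cv.span (R \<union> B)" using B(3) by simp
    then obtain r s where "r \<in> R" "s \<in> cv.span B" "d = r + s"
      using R by (auto simp: cv.span_Un cv.span_eq_iff[THEN iffD2])
    then show ?thesis by (intro exI[of _ s]) auto
  qed
  then obtain h where h: "\<And>d. h d \<in> cv.span B" "\<And>d. d - h d \<in> R" by metis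
  define L where "L = cvp.construct D h"
  have L: "clinear L" unfolding L_def by (rule cvp.linear_construct[OF D(2)])
  have L_D: "L d = h d" if "d \<in> D" for d
    unfolding L_def using that by (rule cvp.construct_basis[OF D(2)])
  \<comment> \<open>Every \<open>x \<in> span D\<close> differs from \<open>L x\<close> by an element of \<open>R\<close>, so \<open>L\<close> is injective there.\<close>
  have "cv.subspace {x. x - L x \<in> R}"
    using cvp.linear_subspace_vimage[OF cvp.linear_compose_sub[OF cv.linear_id L] R]
    by (simp add: vimage_def)
  then have moved: "cv.span D \<subseteq> {x. x - L x \<in> R}"
    using h(2) L_D by (intro cv.span_minimal) auto
  have "x = 0" if "x \<in> cv.span D" "L x = 0" for x
    using moved RD that by auto
  then have inj: "inj_on L (cv.span D)"
    by (simp add: cvp.linear_inj_on_iff_eq_0[OF L])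
  have "card D = card (L ` D)"
    using inj cv.span_superset[of D] by (intro card_image[symmetric]) (auto intro: inj_on_subset)
  also have "\<dots> \<le> card B"
    using cv.independent_span_bound[OF B(1) cvp.linear_independent_injective_image[OF L D(2) inj]]
      L_D h(1) by auto
  finally show "card D \<le> n" using B(2) by simp
qed

lemma exists_complement:
  fixes R V0 :: "'a::complex_banach set"
  assumes R: "cv.subspace R" and V0: "finite V0" and span_RV0: "cv.span (R \<union> V0) = UNIV"
  obtains D where "finite D" "cv.independent D" "R \<inter> cv.span D \<subseteq> {0}"
    "cv.span (R \<union> D) = UNIV" "card D + cv.dim (R \<inter> cv.span V0) = cv.dim V0"
proof -
  let ?V = "cv.span V0"
  obtain C where C: "C \<subseteq> R \<inter> ?V" "cv.independent C" "R \<inter> ?V \<subseteq> cv.span C"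
    "card C = cv.dim (R \<inter> ?V)"
    using cv.basis_exists by blast
  obtain B where B: "C \<subseteq> B" "B \<subseteq> ?V" "cv.independent B" "?V \<subseteq> cv.span B"
    using cv.maximal_independent_subset_extend[of C ?V] C by blast
  have "finite B" using cv.independent_span_bound[OF V0 B(3)] B(2) by auto
  define D where "D = B - C"
  have BCD: "B = C \<union> D" "C \<inter> D = {}" using B(1) by (auto simp: D_def)
  have "D \<subseteq> ?V" using B(2) BCD by auto
  have "R \<inter> cv.span D \<subseteq> {0}"
  proof -
    have "R \<inter> cv.span D \<subseteq> cv.span C \<inter> cv.span D"
      using C(3) cv.span_mono[OF \<open>D \<subseteq> ?V\<close>] by (auto simp: cv.span_span)
    then show ?thesis using span_Int_span_eq_zero[of C D] B(3) BCD by auto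
  qed
  moreover have "cv.span (R \<union> D) = UNIV"
  proof -
    have "R \<union> V0 \<subseteq> cv.span (R \<union> D)"
      using C(1) BCD B(4) cv.span_mono[of B "R \<union> D"] cv.span_superset[of V0]
        cv.span_superset[of "R \<union> D"] by blast
    then show ?thesis
      using cv.span_minimal[OF _ cv.subspace_span] span_RV0 by blast
  qed
  moreover have "card D + cv.dim (R \<inter> ?V) = cv.dim V0"
    using \<open>finite B\<close> BCD C(4) cv.basis_card_eq_dim[OF B(2,4,3)]
    by (simp add: card_Un_disjoint)
  moreover have "cv.independent D" using B(3) BCD cv.independent_mono by blast
  ultimately show thesis
    using that \<open>finite B\<close> BCD(1) by (metis finite_Un)
qed

lemma cdim_eq_dim:
  fixes S :: "'a::complex_banach set"
  assumes "finite S0" "S \<subseteq> cv.span S0"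
  shows "cdim S = cv.dim S"
  unfolding cdim_def cspan_eq_span
proof (rule Least_equality)
  obtain B where B: "B \<subseteq> S" "cv.independent B" "S \<subseteq> cv.span B" "card B = cv.dim S"
    using cv.basis_exists by blast
  moreover have "finite B"
    using cv.independent_span_bound[OF assms(1) B(2)] B(1) assms(2) by auto
  ultimately show "\<exists>B. finite B \<and> card B = cv.dim S \<and> B \<subseteq> S \<and> S \<subseteq> cv.span B"
    by blast
next
  fix n assume "\<exists>B. finite B \<and> card B = n \<and> B \<subseteq> S \<and> S \<subseteq> cv.span B"
  then show "cv.dim S \<le> n" using cv.dim_le_card by auto
qed

lemma ccodim_add_dim_Int_span:
  fixes R V0 :: "'a::complex_banach set"
  assumes R: "cv.subspace R" and V0: "finite V0" and span_RV0: "cv.span (R \<union> V0) = UNIV"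
  shows "ccodim R + cv.dim (R \<inter> cv.span V0) = cv.dim V0"
proof -
  obtain D where "finite D" "cv.independent D" "R \<inter> cv.span D \<subseteq> {0}"
    "cv.span (R \<union> D) = UNIV" "card D + cv.dim (R \<inter> cv.span V0) = cv.dim V0"
    using exists_complement[OF R V0 span_RV0] by metis
  then show ?thesis using ccodim_eq_card[OF R] by simp
qed

lemma clinear_bij_vimage_span:
  fixes G :: "'a::complex_banach \<Rightarrow> 'a"
  assumes G: "clinear G" "bij G" and F: "finite F"
  obtains F' where "finite F'" "G -` cv.span F = cv.span F'" "cv.dim (G -` cv.span F) = cv.dim F"
proof -
  let ?W = "G -` cv.span F"
  obtain g where g: "clinear g" "G \<circ> g = id"
    using cvp.linear_surjective_right_inverse[OF G(1) bij_is_surj[OF G(2)]] by blast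
  have Gg: "G (g y) = y" for y using pointfree_idE[OF g(2)] .
  have gG: "g (G x) = x" for x
    using G(2) Gg[of "G x"] by (auto simp: bij_def inj_eq)
  have "?W = g ` cv.span F"
    using Gg gG by (force intro: image_eqI[of _ g "G _"])
  then have W: "?W = cv.span (g ` F)" by (simp add: cvp.linear_span_image[OF g(1)])
  have "G x = 0 \<Longrightarrow> x = 0" for x
    using gG[of x] cvp.linear_0[OF g(1)] by simp
  then have "{x \<in> ?W. G x = 0} = {0}"
    using cvp.linear_0[OF G(1)] cv.span_zero by auto
  moreover have "cv.dim {0::'a} = 0"
    using cv.dim_span[of "{}::'a set"] cv.dim_eq_card_independent[OF cv.independent_empty] by simp
  moreover have "G ` ?W = cv.span F" using Gg by (force intro: image_eqI[of _ G "g _"])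
  ultimately have "cv.dim ?W = cv.dim F"
    using dim_kernel_add_dim_image[OF G(1) cv.subspace_span finite_imageI[OF F, of g] order_refl] W
    by simp
  with W show thesis using that F by blast
qed

lemma fredholm_index_zero_bij_diff_finite_rank:
  fixes G K :: "'a::complex_banach \<Rightarrow> 'a"
  assumes G: "clinear G" "bij G" and K: "clinear K" and F: "finite F"
    and range_K: "range K \<subseteq> cv.span F"
  shows "fredholm (\<lambda>x. G x - K x) \<and> findex (\<lambda>x. G x - K x) = 0"
proof -
  define B where "B x = G x - K x" for x
  define W where "W = G -` cv.span F"
  have B: "clinear B"
    unfolding B_def using cvp.linear_compose_sub[OF G(1) K] by (simp add: fun_diff_def)
  obtain F' where F': "finite F'" "W = cv.span F'" "cv.dim W = cv.dim F"
    using clinear_bij_vimage_span[OF G F] unfolding W_def by blast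
  have B_in_span: "B x \<in> cv.span F \<longleftrightarrow> G x \<in> cv.span F" for x
  proof -
    have "B x + K x = G x" by (simp add: B_def)
    then show ?thesis using cv.span_add_eq2[of "K x" F "B x"] range_K by auto
  qed
  have kernel_B: "kernel B \<subseteq> W"
  proof
    fix x assume "x \<in> kernel B"
    then have "B x \<in> cv.span F" by (simp add: kernel_def cv.span_zero)
    then show "x \<in> W" using B_in_span by (simp add: W_def)
  qed
  have span_range_B: "cv.span (range B \<union> F) = UNIV"
  proof -
    have "G x \<in> cv.span (range B \<union> F)" for x
    proof -
      have "K x \<in> cv.span (range B \<union> F)"
        using range_K cv.span_mono[of F "range B \<union> F"] by blast
      moreover have "B x \<in> cv.span (range B \<union> F)" by (simp add: cv.span_base)
      ultimately show ?thesis using cv.span_add by (fastforce simp: B_def)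
    qed
    then show ?thesis using G(2) by (metis UNIV_eq_I bij_pointE)
  qed
  have "{x \<in> W. B x = 0} = kernel B" using kernel_B by (auto simp: kernel_def)
  then have "cv.dim (kernel B) + cv.dim (B ` W) = cv.dim W"
    using dim_kernel_add_dim_image[OF B _ F'(1), of W] F'(2) by simp
  moreover have "range B \<inter> cv.span F = B ` W" using B_in_span by (auto simp: W_def)
  moreover have "ccodim (range B) + cv.dim (range B \<inter> cv.span F) = cv.dim F"
    using ccodim_add_dim_Int_span[OF cvp.linear_subspace_image[OF B cv.subspace_UNIV] F span_range_B]
    .
  moreover have "cdim (kernel B) = cv.dim (kernel B)"
    using cdim_eq_dim[OF F'(1)] kernel_B F'(2) by blast
  ultimately have "findex B = 0" unfolding findex_def using F'(3) by simp
  moreover have "fredholm B"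
    unfolding fredholm_def cspan_eq_span using F F'(1,2) kernel_B span_range_B by blast
  ultimately show ?thesis by (simp add: B_def[abs_def])
qed

section \<open>Hahn--Banach\<close>

definition sublinear :: "('a::real_vector \<Rightarrow> real) \<Rightarrow> bool" where
  "sublinear p \<longleftrightarrow> (\<forall>x y. p (x + y) \<le> p x + p y) \<and> (\<forall>t x. 0 < t \<longrightarrow> p (t *\<^sub>R x) = t * p x)"

lemma sublinear_add: "sublinear p \<Longrightarrow> p (x + y) \<le> p x + p y"
  unfolding sublinear_def by blast

lemma sublinear_scaleR_pos: "sublinear p \<Longrightarrow> 0 < t \<Longrightarrow> p (t *\<^sub>R x) = t * p x"
  unfolding sublinear_def by blast

lemma sublinear_norm: "sublinear norm"
  by (simp add: sublinear_def norm_triangle_ineq)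

text \<open>Linear functionals on subspaces are handled through their graphs, so that extending a
  functional becomes enlarging a set and Zorn's lemma applies directly.\<close>

definition linear_graph :: "('a::real_vector \<times> real) set \<Rightarrow> bool" where
  "linear_graph G \<longleftrightarrow> (0, 0) \<in> G
    \<and> (\<forall>x a y b. (x, a) \<in> G \<longrightarrow> (y, b) \<in> G \<longrightarrow> (x + y, a + b) \<in> G)
    \<and> (\<forall>x a r. (x, a) \<in> G \<longrightarrow> (r *\<^sub>R x, r * a) \<in> G)
    \<and> (\<forall>x a b. (x, a) \<in> G \<longrightarrow> (x, b) \<in> G \<longrightarrow> a = b)"

definition dominated_graph :: "('a::real_vector \<Rightarrow> real) \<Rightarrow> ('a \<times> real) set \<Rightarrow> bool" where
  "dominated_graph p G \<longleftrightarrow> linear_graph G \<and> (\<forall>(x, a) \<in> G. a \<le> p x)"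

definition adjoin_graph :: "('a::real_vector \<times> real) set \<Rightarrow> 'a \<Rightarrow> real \<Rightarrow> ('a \<times> real) set" where
  "adjoin_graph G x0 c = {(m + t *\<^sub>R x0, a + t * c) | m a t. (m, a) \<in> G}"

lemma linear_graphD:
  assumes "linear_graph G"
  shows linear_graph_zero: "(0, 0) \<in> G"
    and linear_graph_add: "(x, a) \<in> G \<Longrightarrow> (y, b) \<in> G \<Longrightarrow> (x + y, a + b) \<in> G"
    and linear_graph_scale: "(x, a) \<in> G \<Longrightarrow> (r *\<^sub>R x, r * a) \<in> G"
    and linear_graph_unique: "(x, a) \<in> G \<Longrightarrow> (x, b) \<in> G \<Longrightarrow> a = b"
  using assms unfolding linear_graph_def by blast+

lemma subset_adjoin_graph: "G \<subseteq> adjoin_graph G x0 c"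
  unfolding adjoin_graph_def by (force intro: exI[of _ 0])

lemma adjoin_graph_point: "(0, 0) \<in> G \<Longrightarrow> (x0, c) \<in> adjoin_graph G x0 c"
  unfolding adjoin_graph_def by (force intro: exI[of _ 1])

lemma linear_graph_adjoin:
  assumes G: "linear_graph G" and x0: "x0 \<notin> fst ` G"
  shows "linear_graph (adjoin_graph G x0 c)"
  unfolding linear_graph_def
proof (intro conjI allI impI)
  show "(0, 0) \<in> adjoin_graph G x0 c"
    using subset_adjoin_graph linear_graph_zero[OF G] by blast
next
  fix x a y b assume "(x, a) \<in> adjoin_graph G x0 c" "(y, b) \<in> adjoin_graph G x0 c"
  then obtain m1 a1 t1 m2 a2 t2 where h: "(m1, a1) \<in> G" "x = m1 + t1 *\<^sub>R x0" "a = a1 + t1 * c"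
    "(m2, a2) \<in> G" "y = m2 + t2 *\<^sub>R x0" "b = a2 + t2 * c" unfolding adjoin_graph_def by blast
  have "x + y = (m1 + m2) + (t1 + t2) *\<^sub>R x0" "a + b = (a1 + a2) + (t1 + t2) * c"
    using h by (auto simp: algebra_simps)
  then show "(x + y, a + b) \<in> adjoin_graph G x0 c"
    unfolding adjoin_graph_def using linear_graph_add[OF G h(1,4)] by blast
next
  fix x a r assume "(x, a) \<in> adjoin_graph G x0 c"
  then obtain m a' t where h: "(m, a') \<in> G" "x = m + t *\<^sub>R x0" "a = a' + t * c"
    unfolding adjoin_graph_def by blast
  have "r *\<^sub>R x = r *\<^sub>R m + (r * t) *\<^sub>R x0" "r * a = r * a' + (r * t) * c"
    using h by (auto simp: algebra_simps)
  then show "(r *\<^sub>R x, r * a) \<in> adjoin_graph G x0 c"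
    unfolding adjoin_graph_def using linear_graph_scale[OF G h(1)] by blast
next
  fix x a b assume "(x, a) \<in> adjoin_graph G x0 c" "(x, b) \<in> adjoin_graph G x0 c"
  then obtain m1 a1 t1 m2 a2 t2 where h: "(m1, a1) \<in> G" "x = m1 + t1 *\<^sub>R x0" "a = a1 + t1 * c"
    "(m2, a2) \<in> G" "x = m2 + t2 *\<^sub>R x0" "b = a2 + t2 * c" unfolding adjoin_graph_def by blast
  have "t1 = t2"
  proof (rule ccontr)
    assume "t1 \<noteq> t2"
    moreover have "m2 - m1 = (t1 - t2) *\<^sub>R x0" using h(2,5) by (simp add: algebra_simps)
    ultimately have "x0 = (1 / (t1 - t2)) *\<^sub>R (m2 + (-1) *\<^sub>R m1)" by simp
    moreover have "((1 / (t1 - t2)) *\<^sub>R (m2 + (-1) *\<^sub>R m1), (1 / (t1 - t2)) * (a2 + (-1) * a1)) \<in> G"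
      using h(1,4) by (intro linear_graph_scale[OF G] linear_graph_add[OF G])
    ultimately show False using x0 by (metis fst_conv image_eqI)
  qed
  then show "a = b" using h linear_graph_unique[OF G] by auto
qed

lemma adjoin_graph_dominated:
  assumes p: "sublinear p" and G: "dominated_graph p G"
    and c: "\<And>m a. (m, a) \<in> G \<Longrightarrow> a - p (m - x0) \<le> c \<and> c \<le> p (m + x0) - a"
    and xa: "(x, a) \<in> adjoin_graph G x0 c"
  shows "a \<le> p x"
proof -
  have lin: "linear_graph G" using G by (simp add: dominated_graph_def)
  obtain m b t where h: "(m, b) \<in> G" "x = m + t *\<^sub>R x0" "a = b + t * c"
    using xa unfolding adjoin_graph_def by blast
  show ?thesis
  proof (cases t "0::real" rule: linorder_cases)
    case less
    define s where "s = - t"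
    have s: "s > 0" using less by (simp add: s_def)
    have "(1 / s) * b - p ((1 / s) *\<^sub>R m - x0) \<le> c"
      using c[OF linear_graph_scale[OF lin h(1)]] by blast
    then have "s * ((1 / s) * b - p ((1 / s) *\<^sub>R m - x0)) \<le> s * c"
      using s by (intro mult_left_mono) auto
    then have "b - p (s *\<^sub>R ((1 / s) *\<^sub>R m - x0)) \<le> s * c"
      using s by (simp add: right_diff_distrib sublinear_scaleR_pos[OF p])
    then show ?thesis using s h by (simp add: s_def scaleR_diff_right)
  next
    case equal
    then show ?thesis using G h unfolding dominated_graph_def by auto
  next
    case greater
    have "c \<le> p ((1 / t) *\<^sub>R m + x0) - (1 / t) * b"
      using c[OF linear_graph_scale[OF lin h(1)]] by blast
    then have "t * c \<le> t * (p ((1 / t) *\<^sub>R m + x0) - (1 / t) * b)"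
      using greater by (intro mult_left_mono) auto
    then have "t * c \<le> p (t *\<^sub>R ((1 / t) *\<^sub>R m + x0)) - b"
      using greater by (simp add: right_diff_distrib sublinear_scaleR_pos[OF p])
    then show ?thesis using greater h by (simp add: scaleR_add_right)
  qed
qed

lemma dominated_graph_extend:
  assumes p: "sublinear p" and G: "dominated_graph p G" and x0: "x0 \<notin> fst ` G"
  shows "\<exists>G'. dominated_graph p G' \<and> G \<subset> G'"
proof -
  have lin: "linear_graph G" and dom: "\<And>x a. (x, a) \<in> G \<Longrightarrow> a \<le> p x"
    using G unfolding dominated_graph_def by auto
  have key: "a - p (m - x0) \<le> p (m' + x0) - a'" if "(m, a) \<in> G" "(m', a') \<in> G" for m a m' a'
  proof -
    have "a + a' \<le> p ((m - x0) + (m' + x0))" using dom[OF linear_graph_add[OF lin that]] by simp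
    also have "\<dots> \<le> p (m - x0) + p (m' + x0)" by (rule sublinear_add[OF p])
    finally show ?thesis by simp
  qed
  define S where "S = {a - p (m - x0) | m a. (m, a) \<in> G}"
  define c where "c = Sup S"
  have "S \<noteq> {}" using linear_graph_zero[OF lin] by (auto simp: S_def)
  have "bdd_above S"
    unfolding bdd_above_def S_def using key[OF _ linear_graph_zero[OF lin]] by auto
  have c: "a - p (m - x0) \<le> c \<and> c \<le> p (m + x0) - a" if "(m, a) \<in> G" for m a
  proof
    show "a - p (m - x0) \<le> c"
      unfolding c_def using that \<open>bdd_above S\<close> by (intro cSup_upper) (auto simp: S_def)
    show "c \<le> p (m + x0) - a"
      unfolding c_def using \<open>S \<noteq> {}\<close> key[OF _ that] by (intro cSup_least) (auto simp: S_def)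
  qed
  have "dominated_graph p (adjoin_graph G x0 c)"
    unfolding dominated_graph_def
    using linear_graph_adjoin[OF lin x0] adjoin_graph_dominated[OF p G c] by auto
  moreover have "(x0, c) \<in> adjoin_graph G x0 c"
    by (rule adjoin_graph_point[OF linear_graph_zero[OF lin]])
  then have "G \<subset> adjoin_graph G x0 c"
    using subset_adjoin_graph x0 by (metis fst_conv image_eqI psubsetI)
  ultimately show ?thesis by blast
qed

lemma dominated_graph_Union_chain:
  assumes ne: "C \<noteq> {}" and graphs: "\<And>G. G \<in> C \<Longrightarrow> dominated_graph p G"
    and chain: "\<And>X Y. X \<in> C \<Longrightarrow> Y \<in> C \<Longrightarrow> X \<subseteq> Y \<or> Y \<subseteq> X"
  shows "dominated_graph p (\<Union>C)"
proof -
  have two: "\<exists>G\<in>C. q \<in> G \<and> q' \<in> G" if "q \<in> \<Union>C" "q' \<in> \<Union>C" for q q'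
    using that chain by blast
  show ?thesis
    unfolding dominated_graph_def linear_graph_def
  proof (intro conjI allI impI ballI)
    show "(0, 0) \<in> \<Union>C"
      using ne graphs unfolding dominated_graph_def linear_graph_def by blast
  next
    fix x a y b assume "(x, a) \<in> \<Union>C" "(y, b) \<in> \<Union>C"
    then obtain G where "G \<in> C" "(x, a) \<in> G" "(y, b) \<in> G" using two by blast
    then show "(x + y, a + b) \<in> \<Union>C"
      using graphs unfolding dominated_graph_def linear_graph_def by blast
  next
    fix x a r assume "(x, a) \<in> \<Union>C"
    then obtain G where "G \<in> C" "(x, a) \<in> G" by blast
    then show "(r *\<^sub>R x, r * a) \<in> \<Union>C"
      using graphs unfolding dominated_graph_def linear_graph_def by blast
  next
    fix x a b assume "(x, a) \<in> \<Union>C" "(x, b) \<in> \<Union>C"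
    then obtain G where "G \<in> C" "(x, a) \<in> G" "(x, b) \<in> G" using two by blast
    then show "a = b" using graphs unfolding dominated_graph_def linear_graph_def by blast
  next
    fix q assume "q \<in> \<Union>C"
    then obtain G where "G \<in> C" "q \<in> G" by blast
    then show "case q of (x, a) \<Rightarrow> a \<le> p x" using graphs unfolding dominated_graph_def by blast
  qed
qed

lemma linear_graph_total_imp_linear:
  assumes G: "linear_graph G" and total: "\<And>x. x \<in> fst ` G"
  obtains u where "linear u" "\<And>x a. (x, a) \<in> G \<longleftrightarrow> u x = a"
proof -
  define u where "u x = (THE a. (x, a) \<in> G)" for x
  have uG: "(x, u x) \<in> G" for x
  proof -
    obtain a where "(x, a) \<in> G" using total[of x] by force
    then show ?thesis unfolding u_def using linear_graph_unique[OF G] by (metis theI)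
  qed
  have u_eq: "(x, a) \<in> G \<longleftrightarrow> u x = a" for x a
    using linear_graph_unique[OF G uG] uG by blast
  have "linear u"
  proof (rule linearI)
    show "u (x + y) = u x + u y" for x y
      using linear_graph_add[OF G uG uG] u_eq by blast
    show "u (r *\<^sub>R x) = r *\<^sub>R u x" for r x
      using linear_graph_scale[OF G uG] u_eq by simp
  qed
  then show thesis using that u_eq by blast
qed

theorem Hahn_Banach_dominated_graph:
  assumes p: "sublinear p" and G0: "dominated_graph p G0"
  shows "\<exists>u. linear u \<and> (\<forall>x. u x \<le> p x) \<and> (\<forall>x a. (x, a) \<in> G0 \<longrightarrow> u x = a)"
proof -
  let ?A = "{G. dominated_graph p G \<and> G0 \<subseteq> G}"
  have "\<exists>M\<in>?A. \<forall>X\<in>?A. M \<subseteq> X \<longrightarrow> X = M"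
  proof (rule subset_Zorn_nonempty)
    show "?A \<noteq> {}" using G0 by blast
  next
    fix C assume "C \<noteq> {}" "subset.chain ?A C"
    then show "\<Union>C \<in> ?A"
      using dominated_graph_Union_chain[of C p] unfolding subset_chain_def by blast
  qed
  then obtain M where "M \<in> ?A" and maximal: "\<forall>X\<in>?A. M \<subseteq> X \<longrightarrow> X = M"
    by (rule bexE)
  then have M: "dominated_graph p M" "G0 \<subseteq> M" by simp_all
  have "x \<in> fst ` M" for x
  proof (rule ccontr)
    assume "x \<notin> fst ` M"
    then obtain G' where "dominated_graph p G'" "M \<subset> G'"
      using dominated_graph_extend[OF p M(1)] by blast
    then show False using maximal M(2) by blast
  qed
  moreover have "linear_graph M" using M(1) by (simp add: dominated_graph_def)
  ultimately obtain u where u: "linear u" "\<And>x a. (x, a) \<in> M \<longleftrightarrow> u x = a"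
    using linear_graph_total_imp_linear by blast
  moreover have "u x \<le> p x" for x
    using M(1) u(2)[of x "u x"] unfolding dominated_graph_def by blast
  moreover have "\<forall>x a. (x, a) \<in> G0 \<longrightarrow> u x = a"
    using M(2) u(2) by blast
  ultimately show ?thesis by blast
qed

lemma separating_functional_closed_subspace_point:
  fixes Y :: "'a::real_normed_vector set"
  assumes Y: "subspace Y" "closed Y" and x0: "x0 \<notin> Y"
  shows "\<exists>u::'a \<Rightarrow> real. bounded_linear u \<and> (\<forall>y\<in>Y. u y = 0) \<and> u x0 \<noteq> 0"
proof -
  define d where "d = infdist x0 Y"
  have d: "d > 0"
    unfolding d_def using Y subspace_0 x0 by (intro infdist_pos_not_in_closed) auto
  have lin: "linear_graph (Y \<times> {0})"
    using Y(1) by (auto simp: linear_graph_def subspace_0 subspace_add subspace_scale)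
  then have dom: "dominated_graph norm (Y \<times> {0})" by (simp add: dominated_graph_def)
  \<comment> \<open>Prescribing the value \<open>d\<close> at \<open>x0\<close> respects the norm because \<open>d\<close> is the distance
    from \<open>x0\<close> to \<open>Y\<close>.\<close>
  have bounds: "a - norm (m - x0) \<le> d \<and> d \<le> norm (m + x0) - a" if "(m, a) \<in> Y \<times> {0}" for m a
  proof -
    have "- m \<in> Y" using that Y(1) by (simp add: subspace_neg)
    then have "d \<le> norm (m + x0)"
      unfolding d_def using infdist_le[of "- m" Y x0] by (simp add: dist_norm add.commute)
    moreover have "- norm (m - x0) \<le> d" using d norm_ge_zero[of "m - x0"] by linarith
    ultimately show ?thesis using that by auto
  qed
  have "x0 \<notin> fst ` (Y \<times> {0})" using x0 by auto
  then have G0: "dominated_graph norm (adjoin_graph (Y \<times> {0}) x0 d)"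
    unfolding dominated_graph_def
    using linear_graph_adjoin[OF lin] adjoin_graph_dominated[OF sublinear_norm dom bounds] by auto
  obtain u where u: "linear u" "\<And>x. u x \<le> norm x"
    and u_graph: "\<And>x a. (x, a) \<in> adjoin_graph (Y \<times> {0}) x0 d \<Longrightarrow> u x = a"
    using Hahn_Banach_dominated_graph[OF sublinear_norm G0] by blast
  have "\<bar>u x\<bar> \<le> norm x" for x
    using u(2)[of x] u(2)[of "- x"] linear_neg[OF u(1), of x] by simp
  then have "bounded_linear u"
    using u(1) by (intro bounded_linear_intro[where K=1]) (auto simp: linear_add linear_scale)
  moreover have "u y = 0" if "y \<in> Y" for y
    using that subset_adjoin_graph[of "Y \<times> {0}" x0 d] by (intro u_graph) blast
  moreover have "u x0 = d"
    using adjoin_graph_point[OF linear_graph_zero[OF lin]] by (rule u_graph)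
  ultimately show ?thesis using d by auto
qed

lemma cmod_mult_infdist_le_norm:
  fixes Y :: "'a::complex_banach set"
  assumes Y: "cv.subspace Y" and z: "z - cscale t a \<in> Y"
  shows "cmod t * infdist a Y \<le> norm z"
proof (cases "t = 0")
  case True then show ?thesis by simp
next
  case False
  define y where "y = z - cscale t a"
  have "- cscale (1 / t) y \<in> Y"
    using z Y by (simp add: y_def cv.subspace_scale cv.subspace_neg)
  then have "infdist a Y \<le> norm (a + cscale (1 / t) y)"
    using infdist_le by (fastforce simp: dist_norm)
  then have "cmod t * infdist a Y \<le> cmod t * norm (a + cscale (1 / t) y)"
    by (simp add: mult_left_mono)
  also have "\<dots> = norm (cscale t (a + cscale (1 / t) y))" by (simp add: norm_cscale)
  also have "cscale t (a + cscale (1 / t) y) = z"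
    using False by (simp add: cscale_add_right y_def)
  finally show ?thesis .
qed

lemma closed_span_insert:
  fixes Y :: "'a::complex_banach set"
  assumes Y: "cv.subspace Y" "closed Y" and a: "a \<notin> Y"
  shows "closed (cv.span (insert a Y))"
proof -
  define d where "d = infdist a Y"
  have d: "d > 0"
    unfolding d_def using Y cv.subspace_0 a by (intro infdist_pos_not_in_closed) auto
  have "l \<in> cv.span (insert a Y)"
    if x: "\<And>n. x n \<in> cv.span (insert a Y)" and lim: "x \<longlonglongrightarrow> l" for x l
  proof -
    obtain k where k: "\<And>n. x n - cscale (k n) a \<in> Y"
      using x Y(1) unfolding cv.span_insert by (simp add: cv.span_eq_iff[THEN iffD2]) metis
    \<comment> \<open>The coefficients of \<open>a\<close> form a Cauchy sequence because \<open>a\<close> has positive distance to \<open>Y\<close>.\<close>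
    have k_dist: "cmod (k n - k m) * d \<le> dist (x n) (x m)" for n m
    proof -
      have "(x n - x m) - cscale (k n - k m) a = (x n - cscale (k n) a) - (x m - cscale (k m) a)"
        by (simp add: cv.scale_left_diff_distrib algebra_simps)
      also have "\<dots> \<in> Y" using k Y(1) by (simp add: cv.subspace_diff)
      finally show ?thesis
        using cmod_mult_infdist_le_norm[OF Y(1)] by (simp add: d_def dist_norm)
    qed
    have "Cauchy k"
    proof (rule metric_CauchyI)
      fix e :: real assume "e > 0"
      then obtain N where N: "\<And>m n. m \<ge> N \<Longrightarrow> n \<ge> N \<Longrightarrow> dist (x m) (x n) < e * d"
        using d LIMSEQ_imp_Cauchy[OF lim] by (meson metric_CauchyD mult_pos_pos)
      have "dist (k m) (k n) < e" if "m \<ge> N" "n \<ge> N" for m n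
      proof -
        have "cmod (k m - k n) * d < e * d" using k_dist[of m n] N[OF that] by simp
        then show ?thesis using d by (simp add: dist_norm)
      qed
      then show "\<exists>N. \<forall>m\<ge>N. \<forall>n\<ge>N. dist (k m) (k n) < e" by blast
    qed
    then obtain L where "k \<longlonglongrightarrow> L" using Cauchy_convergent_iff convergent_def by blast
    then have "(\<lambda>n. x n - cscale (k n) a) \<longlonglongrightarrow> l - cscale L a"
      using lim bounded_linear.tendsto[OF bounded_linear_cscale_left] by (intro tendsto_diff)
    then have "l - cscale L a \<in> Y"
      by (rule closed_sequentially[OF Y(2) k])
    then show ?thesis
      using Y(1) unfolding cv.span_insert by (auto simp: cv.span_eq_iff[THEN iffD2])
  qed
  then show ?thesis unfolding closed_sequential_limits by blast
qed

lemma closed_span_finite: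
  fixes S :: "'a::complex_banach set"
  assumes "finite S"
  shows "closed (cv.span S)"
  using assms
proof (induction S rule: finite_induct)
  case empty
  then show ?case by simp
next
  case (insert a S)
  show ?case
  proof (cases "a \<in> cv.span S")
    case True
    then show ?thesis using insert.IH by (simp add: cv.span_redundant)
  next
    case False
    then show ?thesis
      using closed_span_insert[OF cv.subspace_span insert.IH False]
      by (simp add: cv.span_insert cv.span_span)
  qed
qed

lemma separating_cfunctional_closed_subspace_point:
  fixes M :: "'a::complex_banach set"
  assumes M: "cv.subspace M" "closed M" and x0: "x0 \<notin> M"
  shows "\<exists>\<phi>::'a \<Rightarrow> complex. bounded_linear \<phi> \<and> (\<forall>c x. \<phi> (cscale c x) = c * \<phi> x)
     \<and> (\<forall>y\<in>M. \<phi> y = 0) \<and> \<phi> x0 \<noteq> 0"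
proof -
  obtain u :: "'a \<Rightarrow> real" where u: "bounded_linear u" "\<forall>y\<in>M. u y = 0" "u x0 \<noteq> 0"
    using separating_functional_closed_subspace_point[OF subspace_if_csubspace[OF M(1)] M(2) x0]
    by blast
  interpret u: bounded_linear u by (rule u(1))
  have u_cscale: "u (cscale c x) = Re c * u x + Im c * u (cscale \<i> x)" for c x
    by (subst cscale_eq_Re_Im) (simp add: u.add u.scale)
  \<comment> \<open>The complexification of the real functional \<open>u\<close>.\<close>
  define \<phi> where "\<phi> x = Complex (u x) (- u (cscale \<i> x))" for x
  have "\<phi> (cscale c x) = c * \<phi> x" for c x
    unfolding \<phi>_def using u_cscale[of "\<i> * c" x]
    by (intro complex_eqI) (simp_all add: u_cscale[of c x] algebra_simps)
  moreover obtain K where K: "\<And>x. norm (u x) \<le> norm x * K" using u.bounded by blast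
  have "bounded_linear \<phi>"
  proof (rule bounded_linear_intro[where K="2 * K"])
    show "\<phi> (x + y) = \<phi> x + \<phi> y" for x y
      unfolding \<phi>_def by (simp add: u.add cscale_add_right complex_eq_iff)
    show "\<phi> (r *\<^sub>R x) = r *\<^sub>R \<phi> x" for r x
      unfolding \<phi>_def by (simp add: u.scale cscale_scaleR_commute complex_eq_iff)
    show "norm (\<phi> x) \<le> norm x * (2 * K)" for x
    proof -
      have "norm (\<phi> x) \<le> \<bar>u x\<bar> + \<bar>u (cscale \<i> x)\<bar>"
        using cmod_le[of "\<phi> x"] by (simp add: \<phi>_def)
      also have "\<dots> \<le> norm x * K + norm (cscale \<i> x) * K"
        using K[of x] K[of "cscale \<i> x"] by simp
      also have "\<dots> = norm x * (2 * K)" by (simp add: norm_cscale)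
      finally show ?thesis .
    qed
  qed
  moreover have "\<forall>y\<in>M. \<phi> y = 0"
    using u(2) M(1) by (simp add: \<phi>_def cv.subspace_scale complex_eq_iff)
  moreover have "\<phi> x0 \<noteq> 0" using u(3) by (simp add: \<phi>_def complex_eq_iff)
  ultimately show ?thesis by blast
qed

lemma biorthogonal_cfunctionals:
  fixes E :: "'a::complex_banach set"
  assumes E: "finite E" "cv.independent E"
  shows "\<exists>\<psi>. \<forall>e\<in>E. bounded_linear (\<psi> e) \<and> (\<forall>c x. \<psi> e (cscale c x) = c * \<psi> e x)
     \<and> (\<forall>e'\<in>E. \<psi> e e' = (if e' = e then 1 else 0))"
proof -
  have "\<exists>\<psi>::'a \<Rightarrow> complex. bounded_linear \<psi> \<and> (\<forall>c x. \<psi> (cscale c x) = c * \<psi> x)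
     \<and> (\<forall>e'\<in>E. \<psi> e' = (if e' = e then 1 else 0))" if e: "e \<in> E" for e
  proof -
    define M where "M = cv.span (E - {e})"
    have "e \<notin> M"
      using E(2) e unfolding M_def cv.dependent_def by auto
    moreover have "closed M" unfolding M_def using E(1) by (simp add: closed_span_finite)
    ultimately obtain \<phi> :: "'a \<Rightarrow> complex" where \<phi>: "bounded_linear \<phi>"
      "\<forall>c x. \<phi> (cscale c x) = c * \<phi> x" "\<forall>y\<in>M. \<phi> y = 0" "\<phi> e \<noteq> 0"
      using separating_cfunctional_closed_subspace_point[OF cv.subspace_span, of "E - {e}" e]
      unfolding M_def by blast
    define \<psi> where "\<psi> x = \<phi> x / \<phi> e" for x
    have "bounded_linear \<psi>"
      unfolding \<psi>_def by (rule bounded_linear_compose[OF bounded_linear_divide \<phi>(1)])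
    moreover have "\<forall>c x. \<psi> (cscale c x) = c * \<psi> x" using \<phi>(2) by (simp add: \<psi>_def)
    moreover have "\<forall>e'\<in>E. \<psi> e' = (if e' = e then 1 else 0)"
      using \<phi>(3,4) unfolding M_def by (auto simp: \<psi>_def intro: cv.span_base)
    ultimately show ?thesis by blast
  qed
  then show ?thesis by (intro bchoice ballI)
qed

section \<open>The bounded inverse theorem\<close>

lemma surj_interior_closure_image_ball:
  fixes S :: "'a::real_normed_vector \<Rightarrow> 'b::banach"
  assumes "surj S"
  shows "\<exists>n::nat. interior (closure (S ` ball 0 (real n))) \<noteq> {}"
proof (rule ccontr)
  define T where "T n = closure (S ` ball 0 (real n))" for n
  assume "\<not> (\<exists>n. interior (T n) \<noteq> {})"
  then have "euclidean interior_of \<Union>(range T) = {}"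
    using completely_metrizable_space_euclidean
    by (intro Baire_category_alt) (auto simp: T_def closed_closedin[symmetric])
  moreover have "\<Union>(range T) = UNIV"
  proof -
    have "y \<in> \<Union>(range T)" for y
    proof -
      obtain x where "y = S x" using assms by (metis surjD)
      moreover obtain n :: nat where "norm x < real n" using reals_Archimedean2 by blast
      ultimately have "y \<in> T n" unfolding T_def using closure_subset by fastforce
      then show ?thesis by blast
    qed
    then show ?thesis by blast
  qed
  ultimately show False by simp
qed

text \<open>The iteration behind the open mapping theorem: approximate solutions with norm control
  are corrected successively, the errors shrinking geometrically.\<close>

lemma approximate_preimages_series:
  fixes S :: "'a::real_normed_vector \<Rightarrow> 'b::real_normed_vector"
  assumes S: "linear S" and M: "M \<ge> 0" and y: "y \<noteq> 0"
    and approx: "\<And>y \<eta>. \<eta> > 0 \<Longrightarrow> \<exists>x. norm x \<le> M * norm y \<and> norm (y - S x) < \<eta>"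
  obtains xs where "\<And>n. norm (xs n) \<le> M * norm y * (1 / 2) ^ n" "(\<lambda>n. S (xs n)) sums y"
proof -
  define c where "c = norm y"
  have c: "c > 0" using y by (simp add: c_def)
  have "\<forall>v \<eta>. \<exists>x. \<eta> > 0 \<longrightarrow> norm x \<le> M * norm v \<and> norm (v - S x) < \<eta>"
    using approx by blast
  then obtain pick where pick: "\<And>v \<eta>. \<eta> > 0 \<Longrightarrow>
      norm (pick v \<eta>) \<le> M * norm v \<and> norm (v - S (pick v \<eta>)) < \<eta>"
    by metis
  \<comment> \<open>\<open>ys n\<close> is the error left after \<open>n\<close> corrections.\<close>
  define ys where "ys = rec_nat y (\<lambda>n v. v - S (pick v (c / 2 ^ Suc n)))"
  define xs where "xs n = pick (ys n) (c / 2 ^ Suc n)" for n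
  have ys_0: "ys 0 = y" by (simp add: ys_def)
  have ys_Suc: "ys (Suc n) = ys n - S (xs n)" for n by (simp add: ys_def xs_def)
  have ys_bound: "norm (ys n) \<le> c * (1 / 2) ^ n" for n
  proof (induction n)
    case 0 then show ?case by (simp add: ys_0 c_def)
  next
    case (Suc n)
    have "norm (ys n - S (xs n)) < c / 2 ^ Suc n" unfolding xs_def using pick c by simp
    then show ?case by (simp add: ys_Suc power_one_over)
  qed
  have xs_bound: "norm (xs n) \<le> M * c * (1 / 2) ^ n" for n
  proof -
    have "norm (xs n) \<le> M * norm (ys n)" unfolding xs_def using pick c by simp
    also have "\<dots> \<le> M * (c * (1 / 2) ^ n)"
      using ys_bound[of n] M by (rule mult_left_mono)
    finally show ?thesis by simp
  qed
  have "(\<lambda>n. c * (1 / 2 :: real) ^ n) \<longlonglongrightarrow> 0"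
    by (intro tendsto_mult_right_zero LIMSEQ_power_zero) simp
  then have "ys \<longlonglongrightarrow> 0"
    by (rule Lim_null_comparison[OF always_eventually[OF allI[OF ys_bound]]])
  then have "(\<lambda>n. S (xs n)) sums y"
    using telescope_sums'[OF \<open>ys \<longlonglongrightarrow> 0\<close>] by (simp add: ys_Suc ys_0)
  with xs_bound show thesis using that unfolding c_def by blast
qed

lemma approximate_preimages_imp_exact:
  fixes S :: "'a::banach \<Rightarrow> 'b::real_normed_vector"
  assumes S: "bounded_linear S" and M: "M \<ge> 0"
    and approx: "\<And>y \<eta>. \<eta> > 0 \<Longrightarrow> \<exists>x. norm x \<le> M * norm y \<and> norm (y - S x) < \<eta>"
  shows "\<exists>x. S x = y \<and> norm x \<le> 2 * M * norm y"
proof (cases "y = 0")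
  case True
  then show ?thesis using linear_simps(3)[OF S] by (intro exI[of _ 0]) simp
next
  case False
  interpret S: bounded_linear S by (rule S)
  obtain xs where xs: "\<And>n. norm (xs n) \<le> M * norm y * (1 / 2) ^ n" "(\<lambda>n. S (xs n)) sums y"
    using approximate_preimages_series[OF S.linear M False approx] by blast
  have geometric: "summable (\<lambda>n. M * norm y * (1 / 2 :: real) ^ n)"
    by (intro summable_mult summable_geometric) simp
  have norm_summable: "summable (\<lambda>n. norm (xs n))"
    by (rule summable_comparison_test'[OF geometric]) (use xs(1) in simp)
  have "norm (suminf xs) \<le> (\<Sum>n. norm (xs n))" by (rule summable_norm[OF norm_summable])
  also have "\<dots> \<le> (\<Sum>n. M * norm y * (1 / 2 :: real) ^ n)"
    by (rule suminf_le[OF xs(1) norm_summable geometric])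
  also have "\<dots> = 2 * M * norm y"
    using suminf_geometric[of "1 / 2 :: real"] by (simp add: suminf_mult)
  finally have "norm (suminf xs) \<le> 2 * M * norm y" .
  moreover have "(\<lambda>n. S (xs n)) sums S (suminf xs)"
    using S.sums[OF summable_sums[OF summable_norm_cancel[OF norm_summable]]] .
  then have "S (suminf xs) = y" using xs(2) by (rule sums_unique2)
  ultimately show ?thesis by blast
qed

lemma approximate_preimages_if_ball_subset_closure:
  fixes S :: "'a::real_normed_vector \<Rightarrow> 'b::real_normed_vector"
  assumes S: "linear S" and \<epsilon>: "\<epsilon> > 0" and ball: "ball y0 \<epsilon> \<subseteq> closure (S ` ball 0 r)"
    and \<eta>: "\<eta> > 0"
  shows "\<exists>x. norm x \<le> 4 * r / \<epsilon> * norm y \<and> norm (y - S x) < \<eta>"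
proof (cases "y = 0")
  case True then show ?thesis using \<eta> linear_0[OF S] by (intro exI[of _ 0]) simp
next
  case False
  interpret S: linear S by (rule S)
  \<comment> \<open>Rescale \<open>y\<close> to \<open>z\<close> of norm \<open>\<epsilon> / 2\<close>; points of \<open>S ` ball 0 r\<close> near \<open>y0 + z\<close> and near \<open>y0\<close>
    differ by an approximation of \<open>z\<close>.\<close>
  define s where "s = \<epsilon> / (2 * norm y)"
  have s: "s > 0" using False \<epsilon> by (simp add: s_def)
  define z where "z = s *\<^sub>R y"
  have \<eta>s: "\<eta> * s / 2 > 0" using \<eta> s by simp
  have "norm z < \<epsilon>" using False \<epsilon> s by (simp add: z_def s_def)
  then have "y0 + z \<in> closure (S ` ball 0 r)" using ball by (auto simp: dist_norm)
  then have "\<exists>u\<in>S ` ball 0 r. dist u (y0 + z) < \<eta> * s / 2"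
    using \<eta>s unfolding closure_approachable by blast
  then obtain a where a: "norm a < r" "dist (S a) (y0 + z) < \<eta> * s / 2" by auto
  have "y0 \<in> closure (S ` ball 0 r)" using ball \<epsilon> by auto
  then have "\<exists>u\<in>S ` ball 0 r. dist u y0 < \<eta> * s / 2"
    using \<eta>s unfolding closure_approachable by blast
  then obtain b where b: "norm b < r" "dist (S b) y0 < \<eta> * s / 2" by auto
  define x where "x = (1 / s) *\<^sub>R (a - b)"
  have "norm (a - b) \<le> 2 * r"
    using a b norm_triangle_ineq4[of a b] by simp
  then have "norm x \<le> 2 * r / s"
    using s by (simp add: x_def divide_right_mono)
  also have "\<dots> = 4 * r / \<epsilon> * norm y" using False \<epsilon> by (simp add: s_def field_simps)
  finally have "norm x \<le> 4 * r / \<epsilon> * norm y" .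
  have "z - S (a - b) = (y0 + z - S a) - (y0 - S b)" by (simp add: S.diff algebra_simps)
  then have "norm (z - S (a - b)) \<le> norm (y0 + z - S a) + norm (y0 - S b)"
    by (simp only: norm_triangle_ineq4)
  also have "\<dots> < \<eta> * s" using a(2) b(2) by (simp add: dist_norm norm_minus_commute)
  finally have "norm (z - S (a - b)) < \<eta> * s" .
  moreover have "y - S x = (1 / s) *\<^sub>R (z - S (a - b))"
    using s by (simp add: x_def z_def S.scaleR S.diff algebra_simps)
  then have "norm (y - S x) = norm (z - S (a - b)) / s" using s by simp
  ultimately have "norm (y - S x) < \<eta>"
    using s by (simp add: pos_divide_less_eq)
  with \<open>norm x \<le> 4 * r / \<epsilon> * norm y\<close> show ?thesis by blast
qed

theorem bounded_linear_bij_bounded_below: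
  fixes S :: "'a::banach \<Rightarrow> 'b::banach"
  assumes S: "bounded_linear S" and bij: "bij S"
  shows "\<exists>\<gamma>>0. \<forall>x. \<gamma> * norm x \<le> norm (S x)"
proof -
  obtain n :: nat and y0 \<epsilon> where \<epsilon>: "\<epsilon> > 0" and ball: "ball y0 \<epsilon> \<subseteq> closure (S ` ball 0 (real n))"
    using surj_interior_closure_image_ball[OF bij_is_surj[OF bij]] by (auto simp: mem_interior)
  define M where "M = 4 * real n / \<epsilon>"
  have M: "M \<ge> 0" using \<epsilon> by (simp add: M_def)
  have "norm x \<le> (2 * M + 1) * norm (S x)" for x
  proof -
    obtain x' where "S x' = S x" "norm x' \<le> 2 * M * norm (S x)"
      using approximate_preimages_imp_exact[OF S M]
        approximate_preimages_if_ball_subset_closure[OF bounded_linear.linear[OF S] \<epsilon> ball]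
      unfolding M_def by blast
    moreover have "2 * M * norm (S x) \<le> (2 * M + 1) * norm (S x)"
      by (intro mult_right_mono) auto
    ultimately show ?thesis using bij by (simp add: bij_def inj_eq)
  qed
  then have "1 / (2 * M + 1) * norm x \<le> norm (S x)" for x
    using M by (simp add: field_simps)
  then show ?thesis using M by (intro exI[of _ "1 / (2 * M + 1)"]) simp
qed

lemma surj_add_small_perturbation:
  fixes S E :: "'a::banach \<Rightarrow> 'b::real_normed_vector"
  assumes S: "linear S" "bij S" and below: "\<And>x. \<gamma> * norm x \<le> norm (S x)" and \<gamma>: "\<gamma> > 0"
    and E: "linear E" and small: "\<And>x. norm (E x) \<le> q * norm x" and q: "0 \<le> q" "q < \<gamma>"
  shows "surj (\<lambda>x. S x + E x)"
proof -
  interpret S: linear S by (rule S(1))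
  interpret E: linear E by (rule E)
  define Si where "Si = inv S"
  have S_Si: "S (Si v) = v" for v unfolding Si_def using S(2) by (meson bij_inv_eq_iff)
  have Si_bound: "\<gamma> * norm (Si v) \<le> norm v" for v using below[of "Si v"] by (simp add: S_Si)
  have Si_S: "Si (S x) = x" for x
    unfolding Si_def using bij_is_inj[OF S(2)] by simp
  have Si_diff: "Si v - Si w = Si (v - w)" for v w
  proof -
    have "Si (v - w) = Si (S (Si v - Si w))" by (simp add: S.diff S_Si)
    then show ?thesis by (simp add: Si_S)
  qed
  have "\<exists>x. y = S x + E x" for y
  proof -
    \<comment> \<open>A solution is a fixed point of the contraction \<open>x \<mapsto> S\<inverse> (y - E x)\<close>.\<close>
    define \<Phi> where "\<Phi> x = Si (y - E x)" for x
    have "\<exists>!x. \<Phi> x = x"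
    proof (rule banach_fix_type)
      show "0 \<le> q / \<gamma>" "q / \<gamma> < 1" using q \<gamma> by simp_all
      show "\<forall>x x'. dist (\<Phi> x) (\<Phi> x') \<le> q / \<gamma> * dist x x'"
      proof (intro allI)
        fix x x'
        have "\<Phi> x - \<Phi> x' = Si (E x' - E x)" by (simp add: \<Phi>_def Si_diff)
        then have "\<gamma> * dist (\<Phi> x) (\<Phi> x') \<le> norm (E x' - E x)"
          using Si_bound by (simp add: dist_norm)
        also have "\<dots> = norm (E (x - x'))" by (simp add: E.diff norm_minus_commute)
        also have "\<dots> \<le> q * dist x x'" using small by (simp add: dist_norm)
        finally show "dist (\<Phi> x) (\<Phi> x') \<le> q / \<gamma> * dist x x'"
          using \<gamma> by (simp add: field_simps)
      qed
    qed
    then obtain x where "\<Phi> x = x" by blast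
    then have "S x = y - E x" unfolding \<Phi>_def by (metis S_Si)
    then show ?thesis by (intro exI[of _ x]) simp
  qed
  then show ?thesis unfolding surj_def by blast
qed

lemma bij_add_small_perturbation:
  fixes S E :: "'a::banach \<Rightarrow> 'b::real_normed_vector"
  assumes S: "linear S" "bij S" and below: "\<And>x. \<gamma> * norm x \<le> norm (S x)" and \<gamma>: "\<gamma> > 0"
    and E: "linear E" and small: "\<And>x. norm (E x) \<le> q * norm x" and q: "0 \<le> q" "q < \<gamma>"
  shows "bij (\<lambda>x. S x + E x)"
proof -
  interpret S: linear S by (rule S(1))
  interpret E: linear E by (rule E)
  have "inj (\<lambda>x. S x + E x)"
  proof (rule injI)
    fix x y assume "S x + E x = S y + E y"
    then have "S (x - y) = - E (x - y)" by (simp add: S.diff E.diff algebra_simps)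
    then have "\<gamma> * norm (x - y) \<le> q * norm (x - y)"
      using below[of "x - y"] small[of "x - y"] by simp
    then have "(\<gamma> - q) * norm (x - y) \<le> 0" by (simp add: algebra_simps)
    then show "x = y" using q by (simp add: mult_le_0_iff)
  qed
  then show ?thesis using surj_add_small_perturbation[OF assms] by (simp add: bij_def)
qed

section \<open>Openness of the Fredholm operators of index zero\<close>

lemma exists_finite_rank_iso:
  fixes E D :: "'a::complex_banach set"
  assumes E: "finite E" "cv.independent E" and D: "finite D" "cv.independent D"
    and card: "card E = card D"
  obtains K where "bounded_linear K" "clinear K" "range K \<subseteq> cv.span D"
    "inj_on K (cv.span E)" "K ` cv.span E = cv.span D"
proof -
  obtain \<psi> where \<psi>: "\<And>e. e \<in> E \<Longrightarrow> bounded_linear (\<psi> e)"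
    "\<And>e c x. e \<in> E \<Longrightarrow> \<psi> e (cscale c x) = c * \<psi> e x"
    "\<And>e e'. e \<in> E \<Longrightarrow> e' \<in> E \<Longrightarrow> \<psi> e e' = (if e' = e then 1 else 0)"
    using biorthogonal_cfunctionals[OF E] by metis
  obtain h where h: "bij_betw h E D" using finite_same_card_bij[OF E(1) D(1) card] by blast
  define K where "K x = (\<Sum>e\<in>E. cscale (\<psi> e x) (h e))" for x
  have K: "bounded_linear K"
    unfolding K_def
    by (intro bounded_linear_sum bounded_linear_compose[OF bounded_linear_cscale_left] \<psi>(1))
  interpret K: bounded_linear K by (rule K)
  have "K (cscale c x) = cscale c (K x)" for c x
    unfolding K_def by (simp add: \<psi>(2) cv.scale_sum_right)
  then have K_clinear: "clinear K"
    unfolding Vector_Spaces.linear_iff using cv.vector_space_axioms K.add by blast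
  have "K x \<in> cv.span D" for x
    unfolding K_def
    by (intro cv.span_sum cv.span_scale cv.span_base) (use bij_betw_apply[OF h] in blast)
  moreover have K_E: "K e = h e" if "e \<in> E" for e
  proof -
    have "K e = (\<Sum>e'\<in>E. if e' = e then h e' else 0)"
      unfolding K_def using that by (intro sum.cong) (simp_all add: \<psi>(3))
    then show ?thesis using E(1) that by simp
  qed
  then have "K ` E = D" using bij_betw_imp_surj_on[OF h] by (simp cong: image_cong)
  moreover have "inj_on K E"
    using bij_betw_imp_inj_on[OF h] K_E by (simp add: inj_on_def)
  then have "inj_on K (cv.span E)"
    using cvp.linear_inj_on_span_independent_image[OF K_clinear] D(2) \<open>K ` E = D\<close> by blast
  moreover have "K ` cv.span E = cv.span D"
    using cvp.linear_span_image[OF K_clinear, of E] \<open>K ` E = D\<close> by simp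
  ultimately show ?thesis using that K K_clinear by blast
qed

lemma bij_add_kernel_iso_complement:
  fixes A K :: "'a::complex_banach \<Rightarrow> 'a"
  assumes A: "clinear A" and K: "clinear K" "range K \<subseteq> cv.span D"
    and K_kernel: "inj_on K (kernel A)" "K ` kernel A = cv.span D"
    and D: "range A \<inter> cv.span D \<subseteq> {0}" "cv.span (range A \<union> D) = UNIV"
  shows "bij (\<lambda>x. A x + K x)"
proof -
  have AK: "clinear (\<lambda>x. A x + K x)"
    by (rule cvp.linear_compose_add[OF A K(1)])
  have R: "cv.subspace (range A)" by (rule cvp.linear_subspace_image[OF A cv.subspace_UNIV])
  have kernel: "cv.subspace (kernel A)"
    unfolding kernel_def by (rule cvp.linear_subspace_kernel[OF A])
  have "x = 0" if "A x + K x = 0" for x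
  proof -
    have "A x = - K x" using that by (simp add: eq_neg_iff_add_eq_0)
    moreover have "K x \<in> cv.span D" using K(2) by blast
    ultimately have "A x \<in> cv.span D" by (simp add: cv.span_neg)
    then have "A x = 0" using D(1) by auto
    then have "x \<in> kernel A" "K x = 0" using that by (simp_all add: kernel_def)
    then show "x = 0"
      using inj_onD[OF K_kernel(1), of x 0] cv.subspace_0[OF kernel] cvp.linear_0[OF K(1)] by simp
  qed
  then have "inj (\<lambda>x. A x + K x)" using cvp.linear_inj_iff_eq_0[OF AK] by blast
  moreover have "\<exists>x. y = A x + K x" for y
  proof -
    have "y \<in> cv.span (range A \<union> D)" using D(2) by simp
    then obtain x0 s where s: "s \<in> cv.span D" "y = A x0 + s"
      unfolding cv.span_Un cv.span_eq_iff[THEN iffD2, OF R] by blast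
    have "s - K x0 \<in> K ` kernel A" using s(1) K(2) K_kernel(2) by (auto intro: cv.span_diff)
    then obtain n where n: "s - K x0 = K n" "n \<in> kernel A" by (rule imageE)
    then have "A (x0 + n) + K (x0 + n) = A x0 + (K x0 + K n)"
      by (simp add: cvp.linear_add[OF A] cvp.linear_add[OF K(1)] kernel_def)
    also have "\<dots> = y" by (simp flip: n(1) add: s(2))
    finally show ?thesis by metis
  qed
  ultimately show ?thesis unfolding bij_def surj_def by blast
qed

lemma fredholm_index_zero_add_finite_rank_bij:
  fixes A :: "'a::complex_banach \<Rightarrow> 'a"
  assumes A: "clinear A" "fredholm A" "findex A = 0"
  obtains K F where "bounded_linear K" "clinear K" "finite F" "range K \<subseteq> cv.span F"
    "bij (\<lambda>x. A x + K x)"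
proof -
  have kernel: "cv.subspace (kernel A)"
    unfolding kernel_def by (rule cvp.linear_subspace_kernel[OF A(1)])
  obtain B0 where B0: "finite B0" "kernel A \<subseteq> cv.span B0"
    using A(2) unfolding fredholm_def cspan_eq_span by blast
  obtain E where E: "E \<subseteq> kernel A" "cv.independent E" "kernel A \<subseteq> cv.span E"
    "card E = cv.dim (kernel A)"
    by (rule cv.basis_exists)
  have "finite E" using cv.independent_span_bound[OF B0(1) E(2)] E(1) B0(2) by auto
  have span_E: "cv.span E = kernel A" using E(1,3) cv.span_minimal[OF E(1) kernel] by blast
  have R: "cv.subspace (range A)" by (rule cvp.linear_subspace_image[OF A(1) cv.subspace_UNIV])
  obtain C0 where "finite C0" "cv.span (range A \<union> C0) = UNIV"
    using A(2) unfolding fredholm_def cspan_eq_span by blast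
  then obtain D where D: "finite D" "cv.independent D" "range A \<inter> cv.span D \<subseteq> {0}"
    "cv.span (range A \<union> D) = UNIV"
    using exists_complement[OF R] by metis
  have "card E = card D"
    using A(3) cdim_eq_dim[OF B0] E(4) ccodim_eq_card[OF R D] by (simp add: findex_def)
  then obtain K where K: "bounded_linear K" "clinear K" "range K \<subseteq> cv.span D"
    "inj_on K (cv.span E)" "K ` cv.span E = cv.span D"
    by (rule exists_finite_rank_iso[OF \<open>finite E\<close> E(2) D(1,2)])
  then have "bij (\<lambda>x. A x + K x)"
    using bij_add_kernel_iso_complement[OF A(1) K(2,3) _ _ D(3,4)] span_E by simp
  with that[OF K(1,2) D(1) K(3)] show ?thesis .
qed

definition weyl_operator :: "('a::complex_banach \<Rightarrow>\<^sub>L 'a) \<Rightarrow> bool" where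
  "weyl_operator B \<longleftrightarrow> fredholm (blinfun_apply B) \<and> findex (blinfun_apply B) = 0"

theorem weyl_operator_ball:
  fixes A :: "'a::complex_banach \<Rightarrow>\<^sub>L 'a"
  assumes A: "is_cbounded A" "weyl_operator A"
  shows "\<exists>r>0. \<forall>B. is_cbounded B \<longrightarrow> norm (B - A) < r \<longrightarrow> weyl_operator B"
proof -
  obtain K F where K: "bounded_linear K" "clinear K" "finite F" "range K \<subseteq> cv.span F"
    and bij: "bij (\<lambda>x. A x + K x)"
    by (rule fredholm_index_zero_add_finite_rank_bij[OF clinear_blinfun_apply[OF A(1)]])
      (use A(2) in \<open>simp_all add: weyl_operator_def\<close>)
  have S: "bounded_linear (\<lambda>x. A x + K x)"
    by (intro bounded_linear_add K(1) blinfun.bounded_linear_right)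
  obtain \<gamma> where \<gamma>: "\<gamma> > 0" "\<And>x. \<gamma> * norm x \<le> norm (A x + K x)"
    using bounded_linear_bij_bounded_below[OF S bij] by blast
  have "weyl_operator B" if B: "is_cbounded B" "norm (B - A) < \<gamma>" for B
  proof -
    have "bij (\<lambda>x. (A x + K x) + (B - A) x)"
      using bounded_linear.linear[OF blinfun.bounded_linear_right] norm_blinfun
      by (rule bij_add_small_perturbation[OF bounded_linear.linear[OF S] bij \<gamma>(2,1) _ _
            norm_ge_zero B(2)])
    moreover have "(\<lambda>x. (A x + K x) + (B - A) x) = (\<lambda>x. B x + K x)"
      by (simp add: fun_eq_iff blinfun.diff_left algebra_simps)
    ultimately have "bij (\<lambda>x. B x + K x)" by simp
    moreover have "clinear (\<lambda>x. B x + K x)"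
      by (rule cvp.linear_compose_add[OF clinear_blinfun_apply[OF B(1)] K(2)])
    ultimately show ?thesis
      using fredholm_index_zero_bij_diff_finite_rank[OF _ _ K(2-4), of "\<lambda>x. B x + K x"]
      by (simp add: weyl_operator_def)
  qed
  then show ?thesis using \<gamma>(1) by blast
qed

lemma compact_weyl_operators_uniform_ball:
  fixes Ks :: "('a::complex_banach \<Rightarrow>\<^sub>L 'a) set"
  assumes "compact Ks" and Ks: "\<And>A. A \<in> Ks \<Longrightarrow> is_cbounded A \<and> weyl_operator A"
  shows "\<exists>\<epsilon>>0. \<forall>A\<in>Ks. \<forall>B. is_cbounded B \<longrightarrow> norm (B - A) < \<epsilon> \<longrightarrow> weyl_operator B"
proof -
  have "\<forall>A\<in>Ks. \<exists>r>0. \<forall>B. is_cbounded B \<longrightarrow> norm (B - A) < r \<longrightarrow> weyl_operator B"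
    using Ks weyl_operator_ball by blast
  then obtain r where r: "\<forall>A\<in>Ks. r A > 0 \<and>
      (\<forall>B. is_cbounded B \<longrightarrow> norm (B - A) < r A \<longrightarrow> weyl_operator B)"
    by (rule bchoice[elim_format]) blast
  have cover: "Ks \<subseteq> \<Union>((\<lambda>A. ball A (r A)) ` Ks)" using r by force
  obtain \<epsilon> where \<epsilon>: "\<epsilon> > 0" "\<And>A. A \<in> Ks \<Longrightarrow> \<exists>G \<in> (\<lambda>A. ball A (r A)) ` Ks. ball A \<epsilon> \<subseteq> G"
    by (rule Heine_Borel_lemma[OF \<open>compact Ks\<close> cover]) auto
  have "weyl_operator B" if "A \<in> Ks" "is_cbounded B" "norm (B - A) < \<epsilon>" for A B
  proof -
    obtain A' where "A' \<in> Ks" "ball A \<epsilon> \<subseteq> ball A' (r A')" using \<epsilon>(2)[OF \<open>A \<in> Ks\<close>] by blast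
    moreover have "B \<in> ball A \<epsilon>" using that(3) by (simp add: dist_norm norm_minus_commute)
    ultimately have "norm (B - A') < r A'" by (auto simp: dist_norm norm_minus_commute)
    then show ?thesis using r \<open>A' \<in> Ks\<close> that(2) by blast
  qed
  then show ?thesis using \<epsilon>(1) by blast
qed

section \<open>The Weyl spectrum\<close>

definition cscale_blinfun :: "complex \<Rightarrow> ('a::complex_banach \<Rightarrow>\<^sub>L 'a)" where
  "cscale_blinfun z = Blinfun (cscale z)"

lemma blinfun_apply_cscale_blinfun [simp]: "blinfun_apply (cscale_blinfun z) = cscale z"
  unfolding cscale_blinfun_def
  by (rule bounded_linear_Blinfun_apply[OF bounded_linear_cscale_right])

lemma is_cbounded_cscale_blinfun: "is_cbounded (cscale_blinfun z)"
  unfolding is_cbounded_def by (simp add: mult.commute)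

lemma norm_cscale_blinfun_le: "norm (cscale_blinfun z :: 'a::complex_banach \<Rightarrow>\<^sub>L 'a) \<le> cmod z"
  by (rule norm_blinfun_bound) (simp_all add: norm_cscale)

lemma cscale_blinfun_diff:
  "cscale_blinfun a - cscale_blinfun b = (cscale_blinfun (a - b) :: 'a::complex_banach \<Rightarrow>\<^sub>L 'a)"
  by (rule blinfun_eqI) (simp add: blinfun.diff_left cv.scale_left_diff_distrib)

lemma weyl_spectrum_iff:
  "z \<in> weyl_spectrum T \<longleftrightarrow> (\<exists>x. \<not> weyl_operator (T x - cscale_blinfun z))"
proof -
  have "blinfun_apply (T x - cscale_blinfun z) = (\<lambda>v. T x v - cscale z v)" for x
    by (simp add: fun_eq_iff blinfun.diff_left)
  then show ?thesis by (simp add: weyl_spectrum_def weyl_family_def weyl_operator_def)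
qed

lemma weyl_spectrum_stable:
  fixes T :: "'x::topological_space \<Rightarrow> ('a::complex_banach \<Rightarrow>\<^sub>L 'a)"
  assumes "compact (UNIV :: 'x set)" "continuous_on UNIV T" "\<forall>x. is_cbounded (T x)"
    and z: "z \<notin> weyl_spectrum T"
  shows "\<exists>\<epsilon>>0. \<forall>S \<mu>. (\<forall>x. is_cbounded (S x)) \<longrightarrow> (\<forall>x. norm (S x - T x) < \<epsilon>)
    \<longrightarrow> cmod (\<mu> - z) < \<epsilon> \<longrightarrow> \<mu> \<notin> weyl_spectrum S"
proof -
  define Ks where "Ks = range (\<lambda>x. T x - cscale_blinfun z)"
  have "compact Ks"
    unfolding Ks_def using assms(1,2) by (intro compact_continuous_image continuous_intros)
  moreover have "is_cbounded A \<and> weyl_operator A" if "A \<in> Ks" for A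
    using that z assms(3) unfolding Ks_def weyl_spectrum_iff
    by (auto intro: is_cbounded_diff is_cbounded_cscale_blinfun)
  ultimately obtain \<delta> where \<delta>: "\<delta> > 0"
    and Ks: "\<And>A B. A \<in> Ks \<Longrightarrow> is_cbounded B \<Longrightarrow> norm (B - A) < \<delta> \<Longrightarrow> weyl_operator B"
    using compact_weyl_operators_uniform_ball[of Ks] by blast
  have "\<mu> \<notin> weyl_spectrum S"
    if S: "\<forall>x. is_cbounded (S x)" "\<forall>x. norm (S x - T x) < \<delta> / 2" and \<mu>: "cmod (\<mu> - z) < \<delta> / 2"
    for S :: "'x \<Rightarrow> 'a \<Rightarrow>\<^sub>L 'a" and \<mu>
  proof -
    have "weyl_operator (S x - cscale_blinfun \<mu>)" for x
    proof (rule Ks)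
      show "T x - cscale_blinfun z \<in> Ks" by (simp add: Ks_def)
      show "is_cbounded (S x - cscale_blinfun \<mu>)"
        using S(1) by (intro is_cbounded_diff is_cbounded_cscale_blinfun) simp
      have "S x - cscale_blinfun \<mu> - (T x - cscale_blinfun z)
          = (S x - T x) + (cscale_blinfun z - cscale_blinfun \<mu>)"
        by (simp add: algebra_simps)
      also have "\<dots> = (S x - T x) + cscale_blinfun (z - \<mu>)" by (simp add: cscale_blinfun_diff)
      also have "norm \<dots> \<le> norm (S x - T x) + norm (cscale_blinfun (z - \<mu>) :: 'a \<Rightarrow>\<^sub>L 'a)"
        by (rule norm_triangle_ineq)
      also have "\<dots> < \<delta> / 2 + \<delta> / 2"
      proof (rule add_strict_mono)
        show "norm (S x - T x) < \<delta> / 2" using S(2) by blast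
        have "cmod (z - \<mu>) < \<delta> / 2" using \<mu> by (simp add: norm_minus_commute)
        then show "norm (cscale_blinfun (z - \<mu>) :: 'a \<Rightarrow>\<^sub>L 'a) < \<delta> / 2"
          by (rule le_less_trans[OF norm_cscale_blinfun_le])
      qed
      finally show "norm (S x - cscale_blinfun \<mu> - (T x - cscale_blinfun z)) < \<delta>" by simp
    qed
    then show ?thesis by (simp add: weyl_spectrum_iff)
  qed
  moreover have "\<delta> / 2 > 0" using \<delta> by simp
  ultimately show ?thesis by blast
qed

lemma kuratowski_limsup_subsetI:
  assumes "\<And>z. z \<notin> A \<Longrightarrow> \<exists>U. open U \<and> z \<in> U \<and> (\<forall>\<^sub>F n in sequentially. B n \<inter> U = {})"
  shows "kuratowski_limsup B \<subseteq> A"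
proof
  fix z assume z: "z \<in> kuratowski_limsup B"
  show "z \<in> A"
  proof (rule ccontr)
    assume "z \<notin> A"
    then obtain U where U: "open U" "z \<in> U" "\<forall>\<^sub>F n in sequentially. B n \<inter> U = {}"
      using assms by blast
    then obtain N where N: "\<And>n. n \<ge> N \<Longrightarrow> B n \<inter> U = {}"
      unfolding eventually_sequentially by blast
    have "{n. B n \<inter> U \<noteq> {}} \<subseteq> {..<N}" using N not_le by auto
    then show False using z U unfolding kuratowski_limsup_def by (auto dest: finite_subset)
  qed
qed

theorem mainTheorem10:
  fixes T :: "'x::topological_space \<Rightarrow> ('a::complex_banach \<Rightarrow>\<^sub>L 'a)"
  assumes "infinite_dimensional TYPE('a)"
    and "compact (UNIV :: 'x set)"
    and "countable (components (UNIV :: 'x set))"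
    and "continuous_on UNIV T"
    and "\<forall>x. is_cbounded (T x)"
  shows "closed (weyl_spectrum T)
    \<and> (\<forall>Ts :: nat \<Rightarrow> 'x \<Rightarrow> ('a \<Rightarrow>\<^sub>L 'a).
          (\<forall>n. continuous_on UNIV (Ts n) \<and> (\<forall>x. is_cbounded (Ts n x)))
          \<and> uniform_limit UNIV Ts T sequentially
          \<longrightarrow> kuratowski_limsup (\<lambda>n. weyl_spectrum (Ts n)) \<subseteq> weyl_spectrum T)"
proof -
  note stable = weyl_spectrum_stable[OF assms(2,4,5)]
  have "open (- weyl_spectrum T)"
    unfolding open_contains_ball
  proof
    fix z assume "z \<in> - weyl_spectrum T"
    then obtain \<epsilon> where "\<epsilon> > 0" and "\<forall>\<mu>. cmod (\<mu> - z) < \<epsilon> \<longrightarrow> \<mu> \<notin> weyl_spectrum T"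
      using stable[of z] assms(5) by force
    then show "\<exists>\<epsilon>>0. ball z \<epsilon> \<subseteq> - weyl_spectrum T" by (auto simp: dist_norm norm_minus_commute)
  qed
  moreover have "kuratowski_limsup (\<lambda>n. weyl_spectrum (Ts n)) \<subseteq> weyl_spectrum T"
    if Ts: "\<forall>n x. is_cbounded (Ts n x)" "uniform_limit UNIV Ts T sequentially" for Ts
  proof (rule kuratowski_limsup_subsetI)
    fix z assume "z \<notin> weyl_spectrum T"
    then obtain \<epsilon> where \<epsilon>: "\<epsilon> > 0" and "\<forall>S \<mu>. (\<forall>x. is_cbounded (S x)) \<longrightarrow>
        (\<forall>x. norm (S x - T x) < \<epsilon>) \<longrightarrow> cmod (\<mu> - z) < \<epsilon> \<longrightarrow> \<mu> \<notin> weyl_spectrum S"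
      using stable by blast
    moreover have "\<forall>\<^sub>F n in sequentially. \<forall>x. dist (Ts n x) (T x) < \<epsilon>"
      using uniform_limitD[OF Ts(2) \<epsilon>] by simp
    ultimately have "\<forall>\<^sub>F n in sequentially. weyl_spectrum (Ts n) \<inter> ball z \<epsilon> = {}"
      using Ts(1) by (auto simp: dist_norm norm_minus_commute elim!: eventually_mono)
    then show "\<exists>U. open U \<and> z \<in> U \<and> (\<forall>\<^sub>F n in sequentially. weyl_spectrum (Ts n) \<inter> U = {})"
      using \<epsilon> by (intro exI[of _ "ball z \<epsilon>"]) simp
  qed
  ultimately show ?thesis by (auto simp: closed_def)
qed

end
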